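(* Let $\Psi_{\rm data}:\mathbb{R}^D\to\mathbb{R}$ be smooth, $m_{\rm prior}\in\mathbb{R}^D$, $\Sigma_{\rm prior}\in\mathbb{R}^{D\times D}$ symmetric positive definite. Consider the mean-field McKean--Vlasov SDE $${\rm d}\theta_\tau=-\Sigma_\tau\Big\{\nabla_\theta V_\tau(\theta_\tau)+\tfrac12\Sigma_{\rm prior}^{-1}(\theta_\tau+m_\tau-2m_{\rm prior})\Big\}{\rm d}\tau+\Sigma_\tau^{1/2}{\rm d}W_\tau,$$ where $W_\tau$ is standard $D$-dimensional Brownian motion, $\pi_\tau$ is the law of $\theta_\tau$ with mean $m_\tau$ and covariance $\Sigma_\tau$, and $V_\tau$ solves $\nabla_\theta\cdot(\pi_\tau\Sigma_\tau\nabla_\theta V_\tau)=-(\Psi_{\rm data}-\pi_\tau[\Psi_{\rm data}])\pi_\tau$. Then any stationary measure $\pi_\infty$ (with mean $m_\infty$ and covariance $\Sigma_\infty$) satisfies $$\frac12\nabla_\theta\cdot\Big(\pi_\infty\Sigma_\infty\big\{\nabla_\theta\log\pi_\infty+\Sigma_{\rm prior}^{-1}(\theta+m_\infty-2m_{\rm prior})\big\}\Big)=\pi_\infty(\Psi_{\rm data}-\pi_\infty[\Psi_{\rm data}]),$$ or, equivalently, for all (sufficiently regular, decaying) test functions $\phi:\mathbb{R}^D\to\mathbb{R}$, $$-\frac12\pi_\infty\Big[\nabla_\theta\phi\cdot\Sigma_\infty\big\{\nabla_\theta\log\pi_\infty+\Sigma_{\rm prior}^{-1}(\theta+m_\infty-2m_{\rm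 prior})\big\}\Big]=\pi_\infty\big[\phi\,(\Psi_{\rm data}-\pi_\infty[\Psi_{\rm data}])\big].$$
   Context: $\pi[f]$ denotes the expectation of $f$ under the PDF $\pi$. *)

theory Defs
  imports "HOL-Analysis.Analysis"
begin

definition partial :: "'n::finite \<Rightarrow> (real^'n \<Rightarrow> real) \<Rightarrow> real^'n \<Rightarrow> real" where
  "partial i f x = frechet_derivative f (at x) (axis i 1)"

definition grad :: "(real^'n::finite \<Rightarrow> real) \<Rightarrow> real^'n \<Rightarrow> real^'n" where
  "grad f x = (\<chi> i. partial i f x)"

definition hess :: "(real^'n::finite \<Rightarrow> real) \<Rightarrow> real^'n \<Rightarrow> real^'n^'n" where
  "hess f x = (\<chi> i j. partial j (partial i f) x)"

fun Ck :: "nat \<Rightarrow> (real^'n::finite \<Rightarrow> real) \<Rightarrow> bool" where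
  "Ck 0 f = continuous_on UNIV f"
| "Ck (Suc k) f = ((\<forall>x. f differentiable (at x)) \<and> continuous_on UNIV f \<and> (\<forall>i. Ck k (partial i f)))"

definition smooth :: "(real^'n::finite \<Rightarrow> real) \<Rightarrow> bool" where
  "smooth f \<longleftrightarrow> (\<forall>k. Ck k f)"

definition test_fun :: "(real^'n::finite \<Rightarrow> real) \<Rightarrow> bool" where
  "test_fun \<phi> \<longleftrightarrow> smooth \<phi> \<and> (\<exists>K. compact K \<and> (\<forall>x. x \<notin> K \<longrightarrow> \<phi> x = 0))"

definition expect :: "(real^'n::finite \<Rightarrow> real) \<Rightarrow> (real^'n \<Rightarrow> real) \<Rightarrow> real" where
  "expect p f = (\<integral>x. p x * f x \<partial>lborel)"

definition mean :: "(real^'n::finite \<Rightarrow> real) \<Rightarrow> real^'n" where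
  "mean p = (\<integral>x. p x *\<^sub>R x \<partial>lborel)"

definition cov :: "(real^'n::finite \<Rightarrow> real) \<Rightarrow> real^'n^'n" where
  "cov p = (\<integral>x. p x *\<^sub>R (\<chi> i j. (x - mean p)$i * (x - mean p)$j) \<partial>lborel)"

definition sym_posdef :: "real^'n^'n::finite \<Rightarrow> bool" where
  "sym_posdef A \<longleftrightarrow> transpose A = A \<and> (\<forall>x. x \<noteq> 0 \<longrightarrow> x \<bullet> (A *v x) > 0)"

definition drift :: "(real^'n::finite \<Rightarrow> real) \<Rightarrow> (real^'n \<Rightarrow> real) \<Rightarrow> real^'n^'n \<Rightarrow> real^'n
                     \<Rightarrow> real^'n \<Rightarrow> real^'n" where
  "drift p V Sp mp \<theta> = - (cov p *v (grad V \<theta> + (1/2) *\<^sub>R (matrix_inv Sp *v (\<theta> + mean p - 2 *\<^sub>R mp))))"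

text \<open>Weak form of the equation  div(p Sigma grad V) = -(Psi - p[Psi]) p  defining V.\<close>

definition solves_V :: "(real^'n::finite \<Rightarrow> real) \<Rightarrow> (real^'n \<Rightarrow> real) \<Rightarrow> (real^'n \<Rightarrow> real) \<Rightarrow> bool" where
  "solves_V p Psi V \<longleftrightarrow> (\<forall>\<phi>. test_fun \<phi> \<longrightarrow>
      expect p (\<lambda>x. grad \<phi> x \<bullet> (cov p *v grad V x)) = expect p (\<lambda>x. \<phi> x * (Psi x - expect p Psi)))"

text \<open>Stationarity of the law p for the SDE  d theta = drift dt + Sigma^(1/2) dW  (generator
  L phi = grad phi . drift + 1/2 tr(Sigma Hess phi)), i.e. the weak stationary Fokker--Planck equation.\<close>

definition stationary :: "(real^'n::finite \<Rightarrow> real) \<Rightarrow> (real^'n \<Rightarrow> real) \<Rightarrow> real^'n^'n \<Rightarrow> real^'n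
                           \<Rightarrow> (real^'n \<Rightarrow> real) \<Rightarrow> bool" where
  "stationary p V Sp mp Psi \<longleftrightarrow> solves_V p Psi V \<and> (\<forall>\<phi>. test_fun \<phi> \<longrightarrow>
      expect p (\<lambda>x. grad \<phi> x \<bullet> drift p V Sp mp x
                    + (1/2) * (\<Sum>i\<in>UNIV. \<Sum>j\<in>UNIV. cov p $ i $ j * hess \<phi> x $ i $ j)) = 0)"

end

theory Submission
  imports Defs
begin

(* The drift part contains
   p[grad phi . Sigma grad V], which the weak equation defining V identifies with
   p[phi (Psi - p[Psi])]; the diffusion part (1/2) p[Sigma : Hess phi] becomes
   -(1/2) p[grad phi . Sigma grad ln p] after integration by parts, because p grad ln p = grad p.
   Integration by parts against a test function comes down to the vanishing of the integral of
   a directional derivative of a compactly supported C^1 function. *)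

lemma integrable_continuous_compact_support:
  fixes f :: "'a::euclidean_space \<Rightarrow> 'b::{banach, second_countable_topology}"
  assumes "continuous_on UNIV f" "compact K" "\<And>x. x \<notin> K \<Longrightarrow> f x = 0"
  shows "integrable lborel f"
proof -
  have "integrable lborel (\<lambda>x. indicator K x *\<^sub>R f x)"
    using assms(2) continuous_on_subset[OF assms(1) subset_UNIV] by (rule borel_integrable_compact)
  also have "(\<lambda>x. indicator K x *\<^sub>R f x) = f"
    using assms(3) by (auto simp: indicator_def)
  finally show ?thesis .
qed

lemma has_derivative_zero_outside_closed:
  fixes f :: "'a::real_normed_vector \<Rightarrow> 'b::real_normed_vector"
  assumes "closed K" "\<And>x. x \<notin> K \<Longrightarrow> f x = 0" "x \<notin> K"
  shows "(f has_derivative (\<lambda>_. 0)) (at x)"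
  by (rule has_derivative_transform_within_open[where f="\<lambda>_. 0" and s="- K"])
     (use assms in \<open>auto simp: open_Compl\<close>)

lemma partial_eq_0_outside_closed:
  assumes "closed K" "\<And>x. x \<notin> K \<Longrightarrow> f x = 0" "x \<notin> K"
  shows "partial i f x = 0"
  using frechet_derivative_at[OF has_derivative_zero_outside_closed[OF assms], symmetric]
  unfolding partial_def by simp

lemma lborel_integral_translate:
  fixes g :: "'a::euclidean_space \<Rightarrow> 'b::{banach, second_countable_topology}"
  assumes "g \<in> borel_measurable borel"
  shows "(\<integral>x. g (x + a) \<partial>lborel) = (\<integral>x. g x \<partial>lborel)"
  using integral_distr[of "(+) a" lborel borel g] assms
  by (simp add: lborel_distr_plus add.commute)

lemma lborel_integrable_translate:
  fixes g :: "'a::euclidean_space \<Rightarrow> 'b::{banach, second_countable_topology}"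
  assumes "integrable lborel g"
  shows "integrable lborel (\<lambda>x. g (x + a))"
  using integrable_distr_eq[of "(+) a" lborel borel g] assms
  by (simp add: lborel_distr_plus add.commute)

lemma has_real_derivative_along_line:
  assumes "\<And>x. (g has_derivative g' x) (at x)"
  shows "((\<lambda>r. g (x + r *\<^sub>R v)) has_real_derivative g' (x + r *\<^sub>R v) v) (at r within S)"
proof -
  have "((\<lambda>r. x + r *\<^sub>R v) has_derivative (\<lambda>h. h *\<^sub>R v)) (at r within S)"
    by (auto intro!: derivative_eq_intros)
  from has_derivative_compose[OF this assms]
  have "((\<lambda>r. g (x + r *\<^sub>R v)) has_derivative (\<lambda>h. g' (x + r *\<^sub>R v) (h *\<^sub>R v))) (at r within S)"
    by (simp add: o_def)
  moreover have "g' (x + r *\<^sub>R v) (h *\<^sub>R v) = g' (x + r *\<^sub>R v) v * h" for h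
    using linear_scale[OF has_derivative_linear[OF assms]] by simp
  ultimately show ?thesis
    by (simp add: has_field_derivative_def)
qed

lemma bounded_range_continuous_compact_support:
  fixes f :: "'a::metric_space \<Rightarrow> 'b::real_normed_vector"
  assumes "continuous_on UNIV f" "compact K" "\<And>x. x \<notin> K \<Longrightarrow> f x = 0"
  shows "bounded (range f)"
proof -
  have "bounded (f ` K)"
    using compact_continuous_image[OF continuous_on_subset[OF assms(1) subset_UNIV] assms(2)]
    by (rule compact_imp_bounded)
  then have "bounded (insert 0 (f ` K))"
    by simp
  moreover have "range f \<subseteq> insert 0 (f ` K)"
    using assms(3) by auto
  ultimately show ?thesis
    by (rule bounded_subset)
qed

lemma difference_quotient_tendsto_directional_derivative:
  fixes g :: "'a::real_normed_vector \<Rightarrow> real" and X :: "nat \<Rightarrow> real"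
  assumes "\<And>x. (g has_derivative g' x) (at x)"
    and "X \<longlonglongrightarrow> 0" "\<And>n. X n \<noteq> 0"
  shows "(\<lambda>n. (g (x + X n *\<^sub>R v) - g x) / X n) \<longlonglongrightarrow> g' x v"
proof -
  have "((\<lambda>r. (g (x + r *\<^sub>R v) - g x) / r) \<longlongrightarrow> g' x v) (at 0)"
    using has_real_derivative_along_line[OF assms(1), of x v 0 UNIV] by (simp add: DERIV_def)
  then have "((\<lambda>r. (g (x + r *\<^sub>R v) - g x) / r) \<circ> X) \<longlonglongrightarrow> g' x v"
    using tendsto_at_iff_sequentially[THEN iffD1, rule_format, of _ _ 0 UNIV X] assms(2,3) by simp
  then show ?thesis
    by (simp add: o_def)
qed

lemma difference_quotient_bounded:
  fixes g :: "'a::real_normed_vector \<Rightarrow> real"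
  assumes "\<And>x. (g has_derivative g' x) (at x)"
    and "\<And>x. \<bar>g' x v\<bar> \<le> B" "t > 0"
  shows "\<bar>(g (x + t *\<^sub>R v) - g x) / t\<bar> \<le> B"
proof -
  obtain z where "g (x + t *\<^sub>R v) - g (x + 0 *\<^sub>R v) = (t - 0) * g' (x + z *\<^sub>R v) v"
    using mvt_very_simple[of 0 t "\<lambda>r. g (x + r *\<^sub>R v)" "\<lambda>r h. h * g' (x + r *\<^sub>R v) v"]
      has_real_derivative_along_line[OF assms(1)] assms(3)
    by (auto simp: has_field_derivative_def mult.commute[of _ "g' _ v"])
  then show ?thesis
    using assms(2)[of "x + z *\<^sub>R v"] assms(3) by (simp add: abs_mult)
qed

lemma lborel_integral_difference_quotient:
  fixes g :: "'a::euclidean_space \<Rightarrow> real"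
  assumes "integrable lborel g"
  shows "(\<integral>x. (g (x + t *\<^sub>R v) - g x) / t \<partial>lborel) = 0"
proof -
  have "(\<integral>x. (g (x + t *\<^sub>R v) - g x) / t \<partial>lborel)
      = ((\<integral>x. g (x + t *\<^sub>R v) \<partial>lborel) - (\<integral>x. g x \<partial>lborel)) / t"
    unfolding integral_divide_zero
    by (rule arg_cong[where f="\<lambda>y. y / t"],
        rule Bochner_Integration.integral_diff[OF lborel_integrable_translate[OF assms] assms])
  then show ?thesis
    using lborel_integral_translate[of g "t *\<^sub>R v"] borel_measurable_integrable[OF assms] by simp
qed

lemma tendsto_integral_difference_quotient:
  fixes g :: "'a::euclidean_space \<Rightarrow> real"
  assumes g': "\<And>x. (g has_derivative g' x) (at x)"
    and cont: "continuous_on UNIV (\<lambda>x. g' x v)"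
    and K: "compact K" and g0: "\<And>x. x \<notin> K \<Longrightarrow> g x = 0"
    and t: "t \<longlonglongrightarrow> 0" "\<And>n. 0 < t n" "\<And>n. t n \<le> 1"
  shows "(\<lambda>n. \<integral>x. (g (x + t n *\<^sub>R v) - g x) / t n \<partial>lborel) \<longlonglongrightarrow> (\<integral>x. g' x v \<partial>lborel)"
proof -
  have "g' x v = 0" if "x \<notin> K" for x
    using has_derivative_unique[OF g' has_derivative_zero_outside_closed[OF compact_imp_closed[OF K] g0 that]]
    by simp
  then obtain B where B: "\<And>x. \<bar>g' x v\<bar> \<le> B"
    using bounded_range_continuous_compact_support[OF cont K] by (auto simp: bounded_iff)
  obtain R where R: "K \<subseteq> cball 0 R"
    using compact_imp_bounded[OF K] unfolding bounded_pos by (auto simp: subset_iff)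
  have cont_g: "continuous_on UNIV g"
    using g' by (meson has_derivative_continuous continuous_at_imp_continuous_on)
  define s where "s n x = (g (x + t n *\<^sub>R v) - g x) / t n" for n x
  have s0: "s n x = 0" if "R + norm v < norm x" for n x
  proof -
    have "norm (t n *\<^sub>R v) \<le> norm v"
      using t(2,3)[of n] by (simp add: mult_left_le_one_le)
    then have "R < norm x" "R < norm (x + t n *\<^sub>R v)"
      using that norm_diff_ineq[of x "t n *\<^sub>R v"] norm_ge_zero[of v] by linarith+
    then have "x \<notin> K" "x + t n *\<^sub>R v \<notin> K"
      using R by auto
    then show ?thesis by (simp add: s_def g0)
  qed
  show ?thesis
    unfolding s_def[symmetric]
  proof (rule integral_dominated_convergence[where w="\<lambda>x. B * indicator (cball 0 (R + norm v)) x"])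
    show "(\<lambda>x. g' x v) \<in> borel_measurable lborel"
      using cont by (simp add: borel_measurable_continuous_onI)
    show "s n \<in> borel_measurable lborel" for n
      unfolding s_def using borel_measurable_continuous_onI[OF cont_g] by measurable
    show "integrable lborel (\<lambda>x. B * indicator (cball 0 (R + norm v)) x)"
      by (auto intro!: integrable_real_mult_indicator emeasure_compact_finite simp: less_top[symmetric])
    show "AE x in lborel. (\<lambda>n. s n x) \<longlonglongrightarrow> g' x v"
      unfolding s_def using difference_quotient_tendsto_directional_derivative[OF g' t(1)] t(2)
      by (simp add: less_imp_neq[symmetric])
    show "AE x in lborel. norm (s n x) \<le> B * indicator (cball 0 (R + norm v)) x" for n
      using difference_quotient_bounded[OF g' B t(2)] s0 unfolding s_def
      by (intro AE_I2) (auto simp: indicator_def not_le)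
  qed
qed

lemma integral_directional_derivative_eq_0:
  fixes g :: "'a::euclidean_space \<Rightarrow> real"
  assumes "\<And>x. (g has_derivative g' x) (at x)" "continuous_on UNIV (\<lambda>x. g' x v)"
    and "compact K" "\<And>x. x \<notin> K \<Longrightarrow> g x = 0"
  shows "(\<integral>x. g' x v \<partial>lborel) = 0"
proof -
  have "continuous_on UNIV g"
    using assms(1) by (meson has_derivative_continuous continuous_at_imp_continuous_on)
  then have int_g: "integrable lborel g"
    by (rule integrable_continuous_compact_support[OF _ assms(3,4)])
  define t :: "nat \<Rightarrow> real" where "t n = inverse (real (Suc n))" for n
  have "t \<longlonglongrightarrow> 0"
    unfolding t_def by (rule LIMSEQ_inverse_real_of_nat)
  moreover have "0 < t n" "t n \<le> 1" for n
    unfolding t_def by (auto simp: field_simps)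
  ultimately have "(\<lambda>n. \<integral>x. (g (x + t n *\<^sub>R v) - g x) / t n \<partial>lborel) \<longlonglongrightarrow> (\<integral>x. g' x v \<partial>lborel)"
    using tendsto_integral_difference_quotient[OF assms] by blast
  moreover have "(\<lambda>n. \<integral>x. (g (x + t n *\<^sub>R v) - g x) / t n \<partial>lborel) = (\<lambda>n. 0)"
    by (intro ext lborel_integral_difference_quotient[OF int_g])
  ultimately show ?thesis
    by (metis LIMSEQ_unique tendsto_const)
qed

lemma integral_mult_partial_eq_neg:
  fixes p q :: "real^'n::finite \<Rightarrow> real"
  assumes "\<And>x. p differentiable (at x)" "\<And>x. q differentiable (at x)"
    and "continuous_on UNIV (partial j p)" "continuous_on UNIV (partial j q)"
    and K: "compact K" and q0: "\<And>x. x \<notin> K \<Longrightarrow> q x = 0"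
  shows "(\<integral>x. p x * partial j q x \<partial>lborel) = - (\<integral>x. partial j p x * q x \<partial>lborel)"
proof -
  have "continuous_on UNIV p" "continuous_on UNIV q"
    using assms(1,2) by (simp_all add: differentiable_imp_continuous_on differentiable_on_def)
  note continuity = this assms(3,4)
  define G where "G x h = p x * frechet_derivative q (at x) h + frechet_derivative p (at x) h * q x" for x h
  have G: "((\<lambda>x. p x * q x) has_derivative G x) (at x)" for x
    unfolding G_def using assms(1,2)
    by (auto intro!: has_derivative_mult simp: frechet_derivative_works)
  have G_axis: "G x (axis j 1) = p x * partial j q x + partial j p x * q x" for x
    by (simp add: G_def partial_def)
  have qj0: "partial j q x = 0" if "x \<notin> K" for x
    using partial_eq_0_outside_closed[OF compact_imp_closed[OF K] q0 that] .
  have "(\<integral>x. G x (axis j 1) \<partial>lborel) = 0"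
    using K q0 by (intro integral_directional_derivative_eq_0[OF G])
      (auto simp: G_axis intro!: continuous_intros continuity)
  moreover have "integrable lborel (\<lambda>x. p x * partial j q x)"
    using K qj0 by (intro integrable_continuous_compact_support) (auto intro!: continuous_intros continuity)
  moreover have "integrable lborel (\<lambda>x. partial j p x * q x)"
    using K q0 by (intro integrable_continuous_compact_support) (auto intro!: continuous_intros continuity)
  ultimately show ?thesis
    by (simp add: G_axis)
qed

lemma Ck_1_continuous_on_grad:
  "Ck 1 f \<Longrightarrow> continuous_on UNIV (grad f)"
  unfolding grad_def by (auto intro!: continuous_on_vec_lambda)

lemma grad_ln:
  assumes "p x > 0" "p differentiable (at x)"
  shows "grad (\<lambda>y. ln (p y)) x = inverse (p x) *\<^sub>R grad p x"
proof -
  have "((\<lambda>y. ln (p y)) has_derivative (\<lambda>h. frechet_derivative p (at x) h * inverse (p x))) (at x)"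
    by (rule DERIV_compose_FDERIV[OF DERIV_ln[OF assms(1)] frechet_derivative_works[THEN iffD1, OF assms(2)]])
  then show ?thesis
    unfolding grad_def partial_def by (simp add: frechet_derivative_at[symmetric] vec_eq_iff mult.commute)
qed

lemma continuous_on_grad_ln:
  assumes "Ck 1 p" "\<And>x. p x > 0"
  shows "continuous_on UNIV (grad (\<lambda>y. ln (p y)))"
proof -
  have "grad (\<lambda>y. ln (p y)) = (\<lambda>x. inverse (p x) *\<^sub>R grad p x)"
    by (rule ext, rule grad_ln[OF assms(2)]) (use assms(1) in simp)
  then show ?thesis
    using assms Ck_1_continuous_on_grad[OF assms(1)]
    by (auto intro!: continuous_intros simp: less_imp_neq[symmetric])
qed

lemma inner_matrix_vector_mult:
  fixes a b :: "real^'n::finite" and S :: "real^'n^'n"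
  shows "a \<bullet> (S *v b) = (\<Sum>i\<in>UNIV. \<Sum>j\<in>UNIV. S $ i $ j * (a $ i * b $ j))"
  by (simp add: inner_vec_def matrix_vector_mult_def sum_distrib_left mult_ac)

lemma test_fun_derivatives:
  assumes "test_fun \<phi>"
  obtains K where "compact K"
    "\<And>i x. x \<notin> K \<Longrightarrow> partial i \<phi> x = 0" "\<And>i j x. x \<notin> K \<Longrightarrow> partial j (partial i \<phi>) x = 0"
    "\<And>i x. partial i \<phi> differentiable (at x)" "\<And>i. continuous_on UNIV (partial i \<phi>)"
    "\<And>i j. continuous_on UNIV (partial j (partial i \<phi>))"
proof -
  obtain K where K: "compact K" and \<phi>0: "\<And>x. x \<notin> K \<Longrightarrow> \<phi> x = 0"
    using assms unfolding test_fun_def by blast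
  have "Ck 2 \<phi>"
    using assms unfolding test_fun_def smooth_def by blast
  moreover have \<phi>1: "partial i \<phi> x = 0" if "x \<notin> K" for i x
    using partial_eq_0_outside_closed[OF compact_imp_closed[OF K] \<phi>0 that] .
  moreover have "partial j (partial i \<phi>) x = 0" if "x \<notin> K" for i j x
    using partial_eq_0_outside_closed[OF compact_imp_closed[OF K] \<phi>1 that] .
  ultimately show ?thesis
    using that K by (simp add: numeral_2_eq_2)
qed

lemma integrable_mult_inner_grad_test_fun:
  assumes "test_fun \<phi>" "continuous_on UNIV p" "continuous_on UNIV u"
  shows "integrable lborel (\<lambda>x. p x * (grad \<phi> x \<bullet> u x))"
proof -
  obtain K where K: "compact K" and "\<And>i x. x \<notin> K \<Longrightarrow> partial i \<phi> x = 0"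
    and "\<And>i. continuous_on UNIV (partial i \<phi>)"
    using test_fun_derivatives[OF assms(1)] by metis
  then have "\<And>x. x \<notin> K \<Longrightarrow> grad \<phi> x = 0" and "continuous_on UNIV (grad \<phi>)"
    unfolding grad_def by (auto simp: vec_eq_iff intro!: continuous_on_vec_lambda)
  then show ?thesis
    using K assms(2,3) by (intro integrable_continuous_compact_support[where K=K]) (auto intro!: continuous_intros)
qed

lemma integrable_mult_hess_test_fun:
  assumes "test_fun \<phi>" "continuous_on UNIV p"
  shows "integrable lborel (\<lambda>x. p x * hess \<phi> x $ i $ j)"
proof -
  obtain K where "compact K" "\<And>x. x \<notin> K \<Longrightarrow> partial j (partial i \<phi>) x = 0"
    "continuous_on UNIV (partial j (partial i \<phi>))"
    using test_fun_derivatives[OF assms(1)] by metis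
  then show ?thesis
    unfolding hess_def using assms(2)
    by (intro integrable_continuous_compact_support[where K=K]) (auto intro!: continuous_intros)
qed

lemma expect_trace_hess_eq_neg_expect_grad_ln:
  fixes p \<phi> :: "real^'n::finite \<Rightarrow> real" and S :: "real^'n^'n"
  assumes "test_fun \<phi>" "Ck 1 p" "\<And>x. p x > 0"
  shows "expect p (\<lambda>x. \<Sum>i\<in>UNIV. \<Sum>j\<in>UNIV. S $ i $ j * hess \<phi> x $ i $ j)
       = - expect p (\<lambda>x. grad \<phi> x \<bullet> (S *v grad (\<lambda>y. ln (p y)) x))"
proof -
  obtain K where K: "compact K" and \<phi>1: "\<And>i x. x \<notin> K \<Longrightarrow> partial i \<phi> x = 0"
    and d\<phi>: "\<And>i x. partial i \<phi> differentiable (at x)" and c\<phi>: "\<And>i. continuous_on UNIV (partial i \<phi>)"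
    and c\<phi>2: "\<And>i j. continuous_on UNIV (partial j (partial i \<phi>))"
    using test_fun_derivatives[OF assms(1)] by metis
  have dp: "\<And>x. p differentiable (at x)" and cp: "continuous_on UNIV p"
    and cpj: "\<And>j. continuous_on UNIV (partial j p)"
    using assms(2) by auto
  have by_parts: "(\<integral>x. p x * hess \<phi> x $ i $ j \<partial>lborel) = - (\<integral>x. partial j p x * partial i \<phi> x \<partial>lborel)" for i j
    unfolding hess_def using integral_mult_partial_eq_neg[OF dp d\<phi> cpj c\<phi>2 K \<phi>1] by simp
  have "p x * (grad \<phi> x \<bullet> (S *v grad (\<lambda>y. ln (p y)) x))
      = (\<Sum>i\<in>UNIV. \<Sum>j\<in>UNIV. S $ i $ j * (partial j p x * partial i \<phi> x))" for x
    using assms(3)[of x] unfolding grad_ln[OF assms(3) dp] inner_matrix_vector_mult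
    by (simp add: grad_def sum_distrib_left field_simps)
  moreover have "integrable lborel (\<lambda>x. partial j p x * partial i \<phi> x)" for i j
    using K \<phi>1 by (intro integrable_continuous_compact_support) (auto intro!: continuous_intros cpj c\<phi>)
  moreover have "integrable lborel (\<lambda>x. p x * hess \<phi> x $ i $ j)" for i j
    by (rule integrable_mult_hess_test_fun[OF assms(1) cp])
  ultimately show ?thesis
    unfolding expect_def
    by (simp add: sum_distrib_left integral_sum by_parts sum_negf mult.left_commute[of "p _"])
qed

lemma inner_drift:
  "a \<bullet> drift p V Sp mp x
     = - (a \<bullet> (cov p *v grad V x)) - 1/2 * (a \<bullet> (cov p *v (matrix_inv Sp *v (x + mean p - 2 *\<^sub>R mp))))"
  unfolding drift_def
  by (simp add: matrix_vector_right_distrib matrix_vector_mult_scaleR inner_diff_right)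

lemma expect_add:
  assumes "integrable lborel (\<lambda>x. p x * f x)" "integrable lborel (\<lambda>x. p x * g x)"
  shows "expect p (\<lambda>x. f x + g x) = expect p f + expect p g"
  using Bochner_Integration.integral_add[OF assms] unfolding expect_def by (simp add: distrib_left)

lemma expect_linear_combination:
  assumes "integrable lborel (\<lambda>x. p x * f x)" "integrable lborel (\<lambda>x. p x * g x)"
    "integrable lborel (\<lambda>x. p x * h x)"
  shows "expect p (\<lambda>x. a * f x + b * g x + c * h x) = a * expect p f + b * expect p g + c * expect p h"
proof -
  have "expect p (\<lambda>x. a * f x + b * g x + c * h x)
      = (\<integral>x. a * (p x * f x) + b * (p x * g x) + c * (p x * h x) \<partial>lborel)"
    unfolding expect_def by (simp add: algebra_simps)
  also have "\<dots> = a * expect p f + b * expect p g + c * expect p h"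
    using assms unfolding expect_def
    by (simp add: Bochner_Integration.integral_add integrable_add)
  finally show ?thesis .
qed

lemma continuous_on_matrix_vector_mult:
  fixes A :: "real^'n::finite^'m::finite"
  shows "continuous_on S f \<Longrightarrow> continuous_on S (\<lambda>x. A *v f x)"
  by (rule bounded_linear.continuous_on[OF matrix_vector_mul_bounded_linear])

lemma stationary_drift_eq_diffusion:
  assumes "stationary p V Sp mp Psi" "test_fun \<phi>" "Ck 1 p" "Ck 1 V"
  shows "expect p (\<lambda>x. grad \<phi> x \<bullet> (cov p *v grad V x))
       + 1/2 * expect p (\<lambda>x. grad \<phi> x \<bullet> (cov p *v (matrix_inv Sp *v (x + mean p - 2 *\<^sub>R mp))))
     = 1/2 * expect p (\<lambda>x. \<Sum>i\<in>UNIV. \<Sum>j\<in>UNIV. cov p $ i $ j * hess \<phi> x $ i $ j)"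
proof -
  define u where "u x = matrix_inv Sp *v (x + mean p - 2 *\<^sub>R mp)" for x
  define tr where "tr x = (\<Sum>i\<in>UNIV. \<Sum>j\<in>UNIV. cov p $ i $ j * hess \<phi> x $ i $ j)" for x
  have cp: "continuous_on UNIV p"
    using assms(3) by simp
  have cu: "continuous_on UNIV u"
    unfolding u_def by (intro continuous_on_matrix_vector_mult continuous_intros)
  have "integrable lborel (\<lambda>x. p x * (grad \<phi> x \<bullet> (cov p *v grad V x)))"
    by (intro integrable_mult_inner_grad_test_fun[OF assms(2) cp] continuous_on_matrix_vector_mult
        Ck_1_continuous_on_grad[OF assms(4)])
  moreover have "integrable lborel (\<lambda>x. p x * (grad \<phi> x \<bullet> (cov p *v u x)))"
    by (intro integrable_mult_inner_grad_test_fun[OF assms(2) cp] continuous_on_matrix_vector_mult cu)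
  moreover have "integrable lborel (\<lambda>x. p x * tr x)"
    unfolding tr_def sum_distrib_left mult.left_commute[of "p _"]
    by (intro Bochner_Integration.integrable_sum integrable_mult_right integrable_mult_hess_test_fun[OF assms(2) cp])
  ultimately have "expect p (\<lambda>x. (- 1) * (grad \<phi> x \<bullet> (cov p *v grad V x))
      + (- 1/2) * (grad \<phi> x \<bullet> (cov p *v u x)) + 1/2 * tr x)
    = (- 1) * expect p (\<lambda>x. grad \<phi> x \<bullet> (cov p *v grad V x))
      + (- 1/2) * expect p (\<lambda>x. grad \<phi> x \<bullet> (cov p *v u x)) + 1/2 * expect p tr"
    by (rule expect_linear_combination)
  moreover have "expect p (\<lambda>x. grad \<phi> x \<bullet> drift p V Sp mp x + 1/2 * tr x)
      = expect p (\<lambda>x. (- 1) * (grad \<phi> x \<bullet> (cov p *v grad V x))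
      + (- 1/2) * (grad \<phi> x \<bullet> (cov p *v u x)) + 1/2 * tr x)"
    by (simp add: inner_drift u_def)
  moreover have "expect p (\<lambda>x. grad \<phi> x \<bullet> drift p V Sp mp x + 1/2 * tr x) = 0"
    using assms(1,2) unfolding stationary_def tr_def by blast
  ultimately show ?thesis
    unfolding u_def tr_def by linarith
qed

theorem mainTheorem6:
  fixes Psi :: "real^'n::finite \<Rightarrow> real"
    and mp :: "real^'n" and Sp :: "real^'n^'n"
    and p :: "real^'n \<Rightarrow> real" and V :: "real^'n \<Rightarrow> real"
  assumes Psi_smooth: "smooth Psi"
    and Sp: "sym_posdef Sp"
    and p_pos: "\<And>x. p x > 0"
    and p_C1: "Ck 1 p"
    and p_int: "integrable lborel p"
    and p_norm: "(\<integral>x. p x \<partial>lborel) = 1"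
    and p_mom2: "integrable lborel (\<lambda>x. p x * norm x ^ 2)"
    and p_Psi: "integrable lborel (\<lambda>x. p x * Psi x)"
    and V_C1: "Ck 1 V"
    and stat: "stationary p V Sp mp Psi"
  shows "\<forall>\<phi>. test_fun \<phi> \<longrightarrow>
     - (1/2) * expect p (\<lambda>x. grad \<phi> x \<bullet> (cov p *v (grad (\<lambda>y. ln (p y)) x
                + (matrix_inv Sp *v (x + mean p - 2 *\<^sub>R mp)))))
     = expect p (\<lambda>x. \<phi> x * (Psi x - expect p Psi))"
proof (intro allI impI)
  fix \<phi> :: "real^'n \<Rightarrow> real"
  assume \<phi>: "test_fun \<phi>"
  define E where "E f = expect p (\<lambda>x. grad \<phi> x \<bullet> (cov p *v f x))" for f
  define u where "u x = matrix_inv Sp *v (x + mean p - 2 *\<^sub>R mp)" for x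
  have cp: "continuous_on UNIV p"
    using p_C1 by simp
  have cu: "continuous_on UNIV u"
    unfolding u_def by (intro continuous_on_matrix_vector_mult continuous_intros)
  have "E (grad V) = expect p (\<lambda>x. \<phi> x * (Psi x - expect p Psi))"
    using stat \<phi> unfolding stationary_def solves_V_def E_def by blast
  moreover have "E (grad V) + 1/2 * E u = - 1/2 * E (grad (\<lambda>y. ln (p y)))"
    using stationary_drift_eq_diffusion[OF stat \<phi> p_C1 V_C1]
      expect_trace_hess_eq_neg_expect_grad_ln[OF \<phi> p_C1 p_pos]
    unfolding E_def u_def by simp
  moreover have "expect p (\<lambda>x. grad \<phi> x \<bullet> (cov p *v (grad (\<lambda>y. ln (p y)) x + u x)))
      = E (grad (\<lambda>y. ln (p y))) + E u"
    using expect_add[OF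
        integrable_mult_inner_grad_test_fun[OF \<phi> cp continuous_on_matrix_vector_mult[OF continuous_on_grad_ln[OF p_C1 p_pos]]]
        integrable_mult_inner_grad_test_fun[OF \<phi> cp continuous_on_matrix_vector_mult[OF cu]]]
    unfolding E_def by (simp add: matrix_vector_right_distrib inner_add_right)
  ultimately show "- (1/2) * expect p (\<lambda>x. grad \<phi> x \<bullet> (cov p *v (grad (\<lambda>y. ln (p y)) x
                + (matrix_inv Sp *v (x + mean p - 2 *\<^sub>R mp)))))
     = expect p (\<lambda>x. \<phi> x * (Psi x - expect p Psi))"
    unfolding u_def by linarith
qed

end
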